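(* For all integers $n,m\ge 1$ with $n-1\le m\le \binom n2$, $$\tilde{r}(\mathcal C_{\mathrm{odd}},\mathcal{C}on_{n,m})\ge \varphi n + m-2\varphi+1,$$ where $\varphi=(1+\sqrt5)/2$ is the golden ratio.
   Context: Given nonempty families $\mathcal H_1,\mathcal H_2$ of finite graphs, the online size Ramsey game $\mathcal R(\mathcal H_1,\mathcal H_2)$ is played on the edge set of the infinite complete graph $K_{\mathbb N}$: in each round Builder selects a previously unselected edge and Painter colours it red or blue. The game ends as soon as, after Painter's move, there is a red copy of some graph in $\mathcal H_1$ or a blue copy of some graph in $\mathcal H_2$. Builder tries to end the game as soon as possible, Painter tries to delay it. The online size Ramsey number $\tilde r(\mathcal H_1,\mathcal H_2)$ is the number of rounds the game lasts when both players play optimally (for single graphs $H_i$ one writes $\tilde r(H_1,H_2)$). Here $\mathcal C_{\mathrm{odd}}$ is the family of all odd cycles and $\mathcal{C}on_{n,m}$ is the family of all connected graphs with exactly $n$ vertices and at least $m$ edges. *)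

theory Defs
  imports Complex_Main "HOL-Library.Extended_Real"
begin

text \<open>Graphs are pairs (V, E) with V a set of natural-number vertices and E a set of
  2-element subsets of V.  The host graph K_N has vertex set UNIV :: nat set.\<close>

type_synonym graph = "nat set \<times> nat set set"

definition is_edge :: "nat set \<Rightarrow> bool" where
  "is_edge e \<longleftrightarrow> (\<exists>u v. u \<noteq> v \<and> e = {u, v})"

definition finite_graph :: "graph \<Rightarrow> bool" where
  "finite_graph G \<longleftrightarrow> finite (fst G) \<and>
     snd G \<subseteq> {{u, v} | u v. u \<in> fst G \<and> v \<in> fst G \<and> u \<noteq> v}"

definition contains_copy :: "nat set set \<Rightarrow> graph \<Rightarrow> bool" where
  "contains_copy E H \<longleftrightarrow> (\<exists>f. inj_on f (fst H) \<and> (\<forall>e \<in> snd H. f ` e \<in> E))"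

definition connected_graph :: "graph \<Rightarrow> bool" where
  "connected_graph G \<longleftrightarrow> fst G \<noteq> {} \<and>
     (\<forall>u \<in> fst G. \<forall>v \<in> fst G. (u, v) \<in> {(x, y). {x, y} \<in> snd G}\<^sup>*)"

definition cycle_graph :: "nat \<Rightarrow> graph" where
  "cycle_graph k = ({0..<k}, {{i, (i + 1) mod k} | i. i < k})"

text \<open>The family of all odd cycles (up to isomorphism, which is irrelevant for copies).\<close>
definition C_odd :: "graph set" where
  "C_odd = {cycle_graph k | k. odd k \<and> k \<ge> 3}"

definition Con :: "nat \<Rightarrow> nat \<Rightarrow> graph set" where
  "Con n m = {G. finite_graph G \<and> connected_graph G \<and> card (fst G) = n \<and> card (snd G) \<ge> m}"

text \<open>A game position: (red edges, blue edges).\<close>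
definition game_over :: "graph set \<Rightarrow> graph set \<Rightarrow> nat set set \<times> nat set set \<Rightarrow> bool" where
  "game_over H1 H2 s \<longleftrightarrow> (\<exists>H \<in> H1. contains_copy (fst s) H) \<or> (\<exists>H \<in> H2. contains_copy (snd s) H)"

fun builder_wins :: "graph set \<Rightarrow> graph set \<Rightarrow> nat \<Rightarrow> nat set set \<times> nat set set \<Rightarrow> bool" where
  "builder_wins H1 H2 0 s = game_over H1 H2 s"
| "builder_wins H1 H2 (Suc k) s = (game_over H1 H2 s \<or>
     (\<exists>e. is_edge e \<and> e \<notin> fst s \<and> e \<notin> snd s \<and>
          builder_wins H1 H2 k (insert e (fst s), snd s) \<and>
          builder_wins H1 H2 k (fst s, insert e (snd s))))"

text \<open>Online size Ramsey number (infinity if Builder cannot force the end).\<close>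
definition online_ramsey :: "graph set \<Rightarrow> graph set \<Rightarrow> ereal" where
  "online_ramsey H1 H2 = Inf {ereal (real k) | k. builder_wins H1 H2 k ({}, {})}"

definition golden_ratio :: real where
  "golden_ratio = (1 + sqrt 5) / 2"

end

theory Submission
  imports Defs
begin

(* Painter keeps a 2-colouring sigma of the vertices in which red edges join different colours
   and blue edges join equal colours.  The red graph is then bipartite, so Builder can only win
   with a blue copy of a connected graph H, and such a copy lies in one colour class t of one
   component W of the coloured graph.  For a component W and a colour t let D(W,t) count the red
   edges of W and the blue edges of W avoiding colour t, and let the surplus be
   s(W,t) = D(W,t) - 1 - phi (|W_t| - 2).  Painter keeps (s(W,True), s(W,False)) in the region
   a, b >= 0, b + phi a >= 2 phi + 1, a + phi b >= 2 phi + 1 for every non-trivial component.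
   An edge inside a component is coloured as sigma dictates, and the surplus only grows.  An edge
   joining two components is coloured red or blue, after swapping the colours of one of them if
   necessary; the identity phi^2 = phi + 1 guarantees that one of the two choices keeps the merged
   component in the region.  When a blue H with n vertices and m edges appears in class t of W,
   none of its edges is counted by D(W,t), so at least D(W,t) + m >= 1 + phi (n - 2) + m edges
   have been played. *)

abbreviation \<phi> :: real where "\<phi> \<equiv> golden_ratio"

lemma golden_ratio_square: "\<phi> * \<phi> = \<phi> + 1"
proof -
  have s: "sqrt 5 * sqrt 5 = (5::real)" by simp
  show ?thesis unfolding golden_ratio_def by (simp add: field_simps s)
qed

lemma one_less_golden_ratio: "1 < \<phi>"
proof -
  have "1 < sqrt (5::real)" by simp
  then show ?thesis unfolding golden_ratio_def by simp
qed

definition in_region :: "real \<Rightarrow> real \<Rightarrow> bool" where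
  "in_region a b \<longleftrightarrow> 0 \<le> a \<and> 0 \<le> b \<and> 2 * \<phi> + 1 \<le> b + \<phi> * a \<and> 2 * \<phi> + 1 \<le> a + \<phi> * b"

(* Also met by the surplus pair of an isolated vertex x (near_region_singleton),
   whose first component belongs to the colour class of x. *)
definition near_region :: "real \<Rightarrow> real \<Rightarrow> bool" where
  "near_region p p' \<longleftrightarrow> 0 \<le> p \<and> 0 \<le> p' \<and> 2 * \<phi> + 1 \<le> p + \<phi> * p' \<and>
     2 * \<phi> \<le> p' + \<phi> * p \<and> 2 * \<phi> + 1 \<le> p' + 2 * \<phi> * p"

lemma in_region_commute: "in_region a b \<longleftrightarrow> in_region b a"
  unfolding in_region_def by auto

lemma in_region_mono:
  assumes "in_region a b" "a \<le> a'" "b \<le> b'"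
  shows "in_region a' b'"
proof -
  have "\<phi> * a \<le> \<phi> * a'" "\<phi> * b \<le> \<phi> * b'"
    using assms(2,3) one_less_golden_ratio by simp_all
  then show ?thesis using assms unfolding in_region_def by linarith
qed

lemma in_region_imp_near_region:
  assumes "in_region p p'"
  shows "near_region p p'"
proof -
  have "0 \<le> \<phi> * p" using assms one_less_golden_ratio unfolding in_region_def by simp
  then show ?thesis using assms unfolding in_region_def near_region_def by linarith
qed

lemma near_region_singleton: "near_region (\<phi> - 1) (2 * \<phi> - 1)"
proof -
  have "\<phi> * (2 * \<phi> - 1) = \<phi> + 2" "\<phi> * (\<phi> - 1) = 1" "2 * \<phi> * (\<phi> - 1) = 2"
    using golden_ratio_square by (simp_all add: algebra_simps)
  then show ?thesis unfolding near_region_def using one_less_golden_ratio by linarith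
qed

(* The two pairs are the surpluses of the merged component after joining two components
   by a red edge and by a blue edge, respectively. *)
lemma near_region_merge:
  assumes P: "near_region p p'" and Q: "near_region q q'"
  shows "in_region (p + q' - (2 * \<phi> - 2)) (p' + q - (2 * \<phi> - 2)) \<or>
         in_region (p + q - (2 * \<phi> - 1)) (p' + q' - (2 * \<phi> - 2))"
proof -
  have \<phi>2: "\<phi> * (2 * \<phi> - 2) = 2" using golden_ratio_square by (simp add: algebra_simps)
  have expand: "\<phi> * (a + b - (2 * \<phi> - 2)) = \<phi> * a + \<phi> * b - 2"
    "\<phi> * (a + b - (2 * \<phi> - 1)) = \<phi> * a + \<phi> * b - 2 - \<phi>" for a b
    using \<phi>2 by (simp_all add: algebra_simps)
  have small: "\<phi> * a < 2" if "a < 2 * \<phi> - 2" for a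
    using mult_strict_left_mono[OF that, of \<phi>] one_less_golden_ratio \<phi>2 by simp
  have pos: "0 \<le> \<phi> * p" "0 \<le> \<phi> * p'" "0 \<le> \<phi> * q" "0 \<le> \<phi> * q'"
    using P Q one_less_golden_ratio unfolding near_region_def by simp_all
  have \<phi>\<phi>: "\<phi> * (\<phi> * a) = \<phi> * a + a" for a
    using golden_ratio_square by (metis distrib_right mult.assoc mult_1)
  have "\<phi> * (2 * \<phi> + 1) = 3 * \<phi> + 2" using golden_ratio_square by (simp add: algebra_simps)
  moreover have "\<phi> * (p + \<phi> * p') \<ge> \<phi> * (2 * \<phi> + 1)" "\<phi> * (q + \<phi> * q') \<ge> \<phi> * (2 * \<phi> + 1)"
    using P Q one_less_golden_ratio unfolding near_region_def by simp_all
  ultimately have P': "\<phi> * p + \<phi> * p' + p' \<ge> 3 * \<phi> + 2" and Q': "\<phi> * q + \<phi> * q' + q' \<ge> 3 * \<phi> + 2"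
    unfolding distrib_left \<phi>\<phi> by linarith+
  show ?thesis
  proof (cases "2 * \<phi> - 2 \<le> p + q' \<and> 2 * \<phi> - 2 \<le> p' + q")
    case True
    then show ?thesis using P Q unfolding in_region_def near_region_def expand by linarith
  next
    case False
    then consider "p + q' < 2 * \<phi> - 2" | "p' + q < 2 * \<phi> - 2" by linarith
    then show ?thesis
    proof cases
      case 1
      have "\<phi> * p + \<phi> * q' < 2" using small[OF 1] by (simp add: algebra_simps)
      moreover have "2 * \<phi> - 2 \<le> p'"
        using small[of p'] 1 P Q unfolding near_region_def by linarith
      ultimately show ?thesis using P Q Q' pos unfolding in_region_def near_region_def expand
        by linarith
    next
      case 2
      have "\<phi> * p' + \<phi> * q < 2" using small[OF 2] by (simp add: algebra_simps)
      moreover have "2 * \<phi> - 2 \<le> q'"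
        using small[of q'] 2 P Q unfolding near_region_def by linarith
      ultimately show ?thesis using P Q P' pos unfolding in_region_def near_region_def expand
        by linarith
    qed
  qed
qed

definition edge_rel :: "nat set set \<Rightarrow> (nat \<times> nat) set" where
  "edge_rel U = {(a, b). {a, b} \<in> U}"

definition component :: "nat set set \<Rightarrow> nat \<Rightarrow> nat set" where
  "component U x = (edge_rel U)\<^sup>* `` {x}"

lemma sym_edge_rel: "sym (edge_rel U)"
  unfolding edge_rel_def sym_def by (simp add: insert_commute)

lemma component_self [simp]: "x \<in> component U x"
  unfolding component_def by simp

lemma component_sym: "y \<in> component U x \<Longrightarrow> x \<in> component U y"
  using sym_rtrancl[OF sym_edge_rel] unfolding component_def sym_def by blast

lemma component_eq: "y \<in> component U x \<Longrightarrow> component U y = component U x"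
  using component_sym unfolding component_def by (blast intro: rtrancl_trans)

lemma component_edge_iff:
  assumes "{a, b} \<in> U"
  shows "a \<in> component U z \<longleftrightarrow> b \<in> component U z"
proof -
  have "(a, b) \<in> edge_rel U" "(b, a) \<in> edge_rel U"
    using assms unfolding edge_rel_def by (simp_all add: insert_commute)
  then show ?thesis unfolding component_def by (blast intro: rtrancl_into_rtrancl)
qed

lemma component_disjoint:
  assumes "y \<notin> component U x"
  shows "component U x \<inter> component U y = {}"
proof (rule ccontr)
  assume "component U x \<inter> component U y \<noteq> {}"
  then obtain w where "w \<in> component U x" "w \<in> component U y" by blast
  then have "component U x = component U y" using component_eq by metis
  then show False using assms component_self by metis
qed

lemma component_subset_closed:
  assumes "z \<in> S" and "\<And>a b. a \<in> S \<Longrightarrow> {a, b} \<in> U \<Longrightarrow> b \<in> S"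
  shows "component U z \<subseteq> S"
proof -
  have "edge_rel U `` S \<subseteq> S" using assms(2) unfolding edge_rel_def by blast
  then have "(edge_rel U)\<^sup>* `` S = S" by (rule Image_closed_trancl)
  then show ?thesis using assms(1) unfolding component_def by blast
qed

lemma component_mono: "U \<subseteq> U' \<Longrightarrow> component U x \<subseteq> component U' x"
  unfolding component_def edge_rel_def by (intro Image_mono rtrancl_mono) auto

lemma finite_component:
  assumes "finite U" and "\<forall>e\<in>U. finite e"
  shows "finite (component U x)"
proof (rule finite_subset)
  show "component U x \<subseteq> insert x (\<Union>U)" by (rule component_subset_closed) blast+
qed (use assms in auto)

lemma component_insert_edge:
  "component (insert {x, y} U) z =
     (if x \<in> component U z \<or> y \<in> component U z then component U x \<union> component U y
      else component U z)"
proof (cases "x \<in> component U z \<or> y \<in> component U z")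
  case True
  let ?U' = "insert {x, y} U"
  have "component U x \<union> component U y \<subseteq> component ?U' x \<union> component ?U' y"
    using component_mono[of U ?U'] by blast
  also have "\<dots> = component ?U' z"
  proof -
    have "y \<in> component ?U' x" using component_edge_iff[of x y ?U' x] by simp
    moreover have "x \<in> component ?U' z \<or> y \<in> component ?U' z"
      using True component_mono[of U ?U' z] by blast
    ultimately show ?thesis using component_eq by blast
  qed
  finally have "component U x \<union> component U y \<subseteq> component ?U' z" .
  moreover have "component ?U' z \<subseteq> component U x \<union> component U y"
  proof (rule component_subset_closed)
    show "z \<in> component U x \<union> component U y" using True component_sym by blast
  next
    fix a b assume "a \<in> component U x \<union> component U y" "{a, b} \<in> ?U'"
    then show "b \<in> component U x \<union> component U y"
      using component_edge_iff[of a b U] by (auto simp: doubleton_eq_iff)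
  qed
  ultimately show ?thesis using True by auto
next
  case False
  have "component (insert {x, y} U) z \<subseteq> component U z"
  proof (rule component_subset_closed)
    fix a b assume "a \<in> component U z" "{a, b} \<in> insert {x, y} U"
    then show "b \<in> component U z"
      using False component_edge_iff[of a b U] by (auto simp: doubleton_eq_iff)
  qed simp
  then show ?thesis using False component_mono[of U "insert {x, y} U" z] by auto
qed

lemma component_insert_edge_inside:
  assumes "y \<in> component U x"
  shows "component (insert {x, y} U) z = component U z"
proof -
  have "component U y = component U x" using assms by (rule component_eq)
  moreover have "component U x = component U z" if "x \<in> component U z \<or> y \<in> component U z"
    using that \<open>component U y = component U x\<close> component_eq by metis
  ultimately show ?thesis unfolding component_insert_edge by auto
qed

lemma edge_subset_component: "{a, b} \<in> U \<Longrightarrow> a \<in> component U z \<Longrightarrow> {a, b} \<subseteq> component U z"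
  using component_edge_iff by blast

lemma is_edge_finite: "is_edge e \<Longrightarrow> finite e"
  unfolding is_edge_def by auto

lemma not_is_edge_empty: "\<not> is_edge {}"
  unfolding is_edge_def by auto

lemma is_edge_doubleton: "x \<noteq> y \<Longrightarrow> is_edge {x, y}"
  unfolding is_edge_def by blast

definition class_size :: "(nat \<Rightarrow> bool) \<Rightarrow> nat set \<Rightarrow> bool \<Rightarrow> nat" where
  "class_size \<sigma> W t = card {v \<in> W. \<sigma> v = t}"

definition charged_edges ::
  "nat set set \<Rightarrow> nat set set \<Rightarrow> (nat \<Rightarrow> bool) \<Rightarrow> nat set \<Rightarrow> bool \<Rightarrow> nat" where
  "charged_edges R B \<sigma> W t = card {e \<in> R. e \<subseteq> W} + card {e \<in> B. e \<subseteq> W \<and> (\<forall>v\<in>e. \<sigma> v \<noteq> t)}"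

(* A blue copy of a connected graph lying in colour class t of W uses none of the edges
   counted by charged_edges R B sigma W t. *)
definition surplus :: "nat set set \<Rightarrow> nat set set \<Rightarrow> (nat \<Rightarrow> bool) \<Rightarrow> nat set \<Rightarrow> bool \<Rightarrow> real" where
  "surplus R B \<sigma> W t = real (charged_edges R B \<sigma> W t) - 1 - \<phi> * (real (class_size \<sigma> W t) - 2)"

definition recolour :: "nat set \<Rightarrow> bool \<Rightarrow> (nat \<Rightarrow> bool) \<Rightarrow> nat \<Rightarrow> bool" where
  "recolour W c \<sigma> v = (if v \<in> W then \<sigma> v \<noteq> c else \<sigma> v)"

lemma card_edges_split:
  assumes "finite E" "{} \<notin> E" "Wx \<inter> Wy = {}"
    and "\<forall>e\<in>E. e \<subseteq> Wx \<union> Wy \<longrightarrow> e \<subseteq> Wx \<or> e \<subseteq> Wy"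
  shows "card {e \<in> E. e \<subseteq> Wx \<union> Wy \<and> P e} =
           card {e \<in> E. e \<subseteq> Wx \<and> P e} + card {e \<in> E. e \<subseteq> Wy \<and> P e}"
proof -
  have "{e \<in> E. e \<subseteq> Wx \<union> Wy \<and> P e} = {e \<in> E. e \<subseteq> Wx \<and> P e} \<union> {e \<in> E. e \<subseteq> Wy \<and> P e}"
    using assms(4) by auto
  moreover have "{e \<in> E. e \<subseteq> Wx \<and> P e} \<inter> {e \<in> E. e \<subseteq> Wy \<and> P e} = {}"
  proof (rule ccontr)
    assume "{e \<in> E. e \<subseteq> Wx \<and> P e} \<inter> {e \<in> E. e \<subseteq> Wy \<and> P e} \<noteq> {}"
    then obtain e where "e \<in> E" "e \<subseteq> Wx \<inter> Wy" by auto
    then show False using assms(2,3) by auto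
  qed
  ultimately show ?thesis using assms(1) by (simp add: card_Un_disjoint)
qed

lemma class_size_recolour_union:
  assumes "finite Wx" "finite Wy" "Wx \<inter> Wy = {}"
  shows "class_size (recolour Wy c \<sigma>) (Wx \<union> Wy) t = class_size \<sigma> Wx t + class_size \<sigma> Wy (t \<noteq> c)"
proof -
  have "{v \<in> Wx \<union> Wy. recolour Wy c \<sigma> v = t} = {v \<in> Wx. \<sigma> v = t} \<union> {v \<in> Wy. \<sigma> v = (t \<noteq> c)}"
    using assms(3) unfolding recolour_def by auto
  then show ?thesis
    unfolding class_size_def using assms by (simp add: card_Un_disjoint disjoint_iff)
qed

lemma charged_edges_recolour_union:
  assumes "finite R" "finite B" "{} \<notin> R \<union> B" "Wx \<inter> Wy = {}"
    and "\<forall>e\<in>R \<union> B. e \<subseteq> Wx \<union> Wy \<longrightarrow> e \<subseteq> Wx \<or> e \<subseteq> Wy"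
  shows "charged_edges R B (recolour Wy c \<sigma>) (Wx \<union> Wy) t =
           charged_edges R B \<sigma> Wx t + charged_edges R B \<sigma> Wy (t \<noteq> c)"
proof -
  let ?\<sigma>' = "recolour Wy c \<sigma>"
  have "{} \<notin> R" "{} \<notin> B" "\<forall>e\<in>R. e \<subseteq> Wx \<union> Wy \<longrightarrow> e \<subseteq> Wx \<or> e \<subseteq> Wy"
    "\<forall>e\<in>B. e \<subseteq> Wx \<union> Wy \<longrightarrow> e \<subseteq> Wx \<or> e \<subseteq> Wy" using assms(3,5) by simp_all
  note split = card_edges_split[OF assms(1) this(1) assms(4) this(3)]
    card_edges_split[OF assms(2) this(2) assms(4) this(4)]
  have "card {e \<in> B. e \<subseteq> Wx \<union> Wy \<and> (\<forall>v\<in>e. ?\<sigma>' v \<noteq> t)} =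
          card {e \<in> B. e \<subseteq> Wx \<and> (\<forall>v\<in>e. ?\<sigma>' v \<noteq> t)} + card {e \<in> B. e \<subseteq> Wy \<and> (\<forall>v\<in>e. ?\<sigma>' v \<noteq> t)}"
    by (rule split(2))
  also have "{e \<in> B. e \<subseteq> Wx \<and> (\<forall>v\<in>e. ?\<sigma>' v \<noteq> t)} = {e \<in> B. e \<subseteq> Wx \<and> (\<forall>v\<in>e. \<sigma> v \<noteq> t)}"
    using assms(4) unfolding recolour_def by (intro Collect_cong) auto
  also have "{e \<in> B. e \<subseteq> Wy \<and> (\<forall>v\<in>e. ?\<sigma>' v \<noteq> t)} = {e \<in> B. e \<subseteq> Wy \<and> (\<forall>v\<in>e. \<sigma> v \<noteq> (t \<noteq> c))}"
    unfolding recolour_def by (intro Collect_cong) auto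
  finally show ?thesis using split(1)[of "\<lambda>_. True"] unfolding charged_edges_def by simp
qed

lemma surplus_recolour_union:
  assumes "finite R" "finite B" "{} \<notin> R \<union> B" "finite Wx" "finite Wy" "Wx \<inter> Wy = {}"
    and "\<forall>e\<in>R \<union> B. e \<subseteq> Wx \<union> Wy \<longrightarrow> e \<subseteq> Wx \<or> e \<subseteq> Wy"
  shows "surplus R B (recolour Wy c \<sigma>) (Wx \<union> Wy) t =
           surplus R B \<sigma> Wx t + surplus R B \<sigma> Wy (t \<noteq> c) + 1 - 2 * \<phi>"
  using charged_edges_recolour_union[OF assms(1-3,6,7)] class_size_recolour_union[OF assms(4-6)]
  unfolding surplus_def by (simp add: algebra_simps)

lemma surplus_insert_red:
  assumes "finite R" "e \<notin> R" "e \<subseteq> W"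
  shows "surplus (insert e R) B \<sigma> W t = surplus R B \<sigma> W t + 1"
proof -
  have "{e' \<in> insert e R. e' \<subseteq> W} = insert e {e' \<in> R. e' \<subseteq> W}" using assms(3) by auto
  then show ?thesis using assms(1,2) unfolding surplus_def charged_edges_def by simp
qed

lemma surplus_insert_blue:
  assumes "finite B" "e \<notin> B"
  shows "surplus R (insert e B) \<sigma> W t =
           surplus R B \<sigma> W t + (if e \<subseteq> W \<and> (\<forall>v\<in>e. \<sigma> v \<noteq> t) then 1 else 0)"
proof (cases "e \<subseteq> W \<and> (\<forall>v\<in>e. \<sigma> v \<noteq> t)")
  case True
  then have "{e' \<in> insert e B. e' \<subseteq> W \<and> (\<forall>v\<in>e'. \<sigma> v \<noteq> t)} =
               insert e {e' \<in> B. e' \<subseteq> W \<and> (\<forall>v\<in>e'. \<sigma> v \<noteq> t)}" by auto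
  then show ?thesis using True assms unfolding surplus_def charged_edges_def by simp
next
  case False
  then have "{e' \<in> insert e B. e' \<subseteq> W \<and> (\<forall>v\<in>e'. \<sigma> v \<noteq> t)} =
               {e' \<in> B. e' \<subseteq> W \<and> (\<forall>v\<in>e'. \<sigma> v \<noteq> t)}" by auto
  then show ?thesis using False unfolding surplus_def charged_edges_def by simp
qed

lemma surplus_mono:
  assumes "finite R'" "finite B'" "R \<subseteq> R'" "B \<subseteq> B'" "\<forall>v\<in>W. \<sigma>' v = \<sigma> v"
  shows "surplus R B \<sigma> W t \<le> surplus R' B' \<sigma>' W t"
proof -
  have "card {e \<in> R. e \<subseteq> W} \<le> card {e \<in> R'. e \<subseteq> W}"
    using assms by (intro card_mono) auto
  moreover have "card {e \<in> B. e \<subseteq> W \<and> (\<forall>v\<in>e. \<sigma> v \<noteq> t)} \<le> card {e \<in> B'. e \<subseteq> W \<and> (\<forall>v\<in>e. \<sigma>' v \<noteq> t)}"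
    using assms by (intro card_mono) auto
  moreover have "class_size \<sigma> W t = class_size \<sigma>' W t"
    unfolding class_size_def using assms(5) by (metis (mono_tags, lifting))
  ultimately show ?thesis unfolding surplus_def charged_edges_def by simp
qed

lemma surplus_singleton:
  assumes "\<forall>e\<in>R \<union> B. is_edge e"
  shows "surplus R B \<sigma> {x} (\<sigma> x) = \<phi> - 1" "surplus R B \<sigma> {x} (\<not> \<sigma> x) = 2 * \<phi> - 1"
proof -
  have no_loop: "\<not> e \<subseteq> {x}" if "e \<in> R \<union> B" for e
  proof -
    have "is_edge e" using assms that by blast
    then obtain u v where "u \<noteq> v" "e = {u, v}" unfolding is_edge_def by blast
    then show ?thesis by blast
  qed
  have "{e \<in> R. e \<subseteq> {x}} = {}" "{e \<in> B. e \<subseteq> {x} \<and> (\<forall>v\<in>e. \<sigma> v \<noteq> t)} = {}" for t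
    using no_loop by blast+
  then have "charged_edges R B \<sigma> {x} t = 0" for t
    unfolding charged_edges_def by (simp only: card.empty add_0)
  moreover have "{v \<in> {x}. \<sigma> v = \<sigma> x} = {x}" "{v \<in> {x}. \<sigma> v = (\<not> \<sigma> x)} = {}" by auto
  then have "class_size \<sigma> {x} (\<sigma> x) = 1" "class_size \<sigma> {x} (\<not> \<sigma> x) = 0"
    unfolding class_size_def by simp_all
  ultimately show "surplus R B \<sigma> {x} (\<sigma> x) = \<phi> - 1" "surplus R B \<sigma> {x} (\<not> \<sigma> x) = 2 * \<phi> - 1"
    unfolding surplus_def by simp_all
qed

definition consistent_colouring :: "nat set set \<Rightarrow> nat set set \<Rightarrow> (nat \<Rightarrow> bool) \<Rightarrow> bool" where
  "consistent_colouring R B \<sigma> \<longleftrightarrow>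
     (\<forall>a b. {a, b} \<in> R \<longrightarrow> \<sigma> a \<noteq> \<sigma> b) \<and> (\<forall>a b. {a, b} \<in> B \<longrightarrow> \<sigma> a = \<sigma> b)"

definition balanced :: "nat set set \<Rightarrow> nat set set \<Rightarrow> (nat \<Rightarrow> bool) \<Rightarrow> nat set \<Rightarrow> bool" where
  "balanced R B \<sigma> W \<longleftrightarrow> in_region (surplus R B \<sigma> W True) (surplus R B \<sigma> W False)"

definition painter_invariant :: "nat set set \<Rightarrow> nat set set \<Rightarrow> (nat \<Rightarrow> bool) \<Rightarrow> bool" where
  "painter_invariant R B \<sigma> \<longleftrightarrow> consistent_colouring R B \<sigma> \<and>
     (\<forall>z. component (R \<union> B) z \<noteq> {z} \<longrightarrow> balanced R B \<sigma> (component (R \<union> B) z))"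

definition safe_position :: "nat set set \<Rightarrow> nat set set \<Rightarrow> bool" where
  "safe_position R B \<longleftrightarrow> finite R \<and> finite B \<and> (\<forall>e\<in>R \<union> B. is_edge e) \<and> (\<exists>\<sigma>. painter_invariant R B \<sigma>)"

lemma balanced_iff_colour:
  "balanced R B \<sigma> W \<longleftrightarrow> in_region (surplus R B \<sigma> W b) (surplus R B \<sigma> W (\<not> b))"
  unfolding balanced_def by (cases b) (auto simp: in_region_commute)

lemma balanced_mono:
  assumes "balanced R B \<sigma> W" "finite R'" "finite B'" "R \<subseteq> R'" "B \<subseteq> B'" "\<forall>v\<in>W. \<sigma>' v = \<sigma> v"
  shows "balanced R' B' \<sigma>' W"
  using assms in_region_mono surplus_mono[OF assms(2-6)] unfolding balanced_def by blast

lemma near_region_component: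
  assumes "painter_invariant R B \<sigma>" "\<forall>e\<in>R \<union> B. is_edge e"
  shows "near_region (surplus R B \<sigma> (component (R \<union> B) x) (\<sigma> x))
                     (surplus R B \<sigma> (component (R \<union> B) x) (\<not> \<sigma> x))"
proof (cases "component (R \<union> B) x = {x}")
  case True
  then show ?thesis using surplus_singleton[OF assms(2)] near_region_singleton by simp
next
  case False
  then have "balanced R B \<sigma> (component (R \<union> B) x)"
    using assms(1) unfolding painter_invariant_def by blast
  then show ?thesis using in_region_imp_near_region balanced_iff_colour by blast
qed

lemma consistent_colouring_recolour_component:
  assumes "consistent_colouring R B \<sigma>"
  shows "consistent_colouring R B (recolour (component (R \<union> B) y) c \<sigma>)"
proof -
  have "recolour (component (R \<union> B) y) c \<sigma> a = recolour (component (R \<union> B) y) c \<sigma> b \<longleftrightarrow> \<sigma> a = \<sigma> b"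
    if "{a, b} \<in> R \<union> B" for a b
    using component_edge_iff[OF that] unfolding recolour_def by auto
  then show ?thesis using assms unfolding consistent_colouring_def by blast
qed

lemma recolour_component_outside:
  "y \<notin> component U x \<Longrightarrow> recolour (component U y) c \<sigma> x = \<sigma> x"
  unfolding recolour_def using component_sym by metis

lemma consistent_colouring_insert_red:
  "consistent_colouring R B \<sigma> \<Longrightarrow> \<sigma> x \<noteq> \<sigma> y \<Longrightarrow> consistent_colouring (insert {x, y} R) B \<sigma>"
  unfolding consistent_colouring_def by (auto simp: doubleton_eq_iff)

lemma consistent_colouring_insert_blue:
  "consistent_colouring R B \<sigma> \<Longrightarrow> \<sigma> x = \<sigma> y \<Longrightarrow> consistent_colouring R (insert {x, y} B) \<sigma>"
  unfolding consistent_colouring_def by (auto simp: doubleton_eq_iff)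

lemma painter_invariant_insert_inside:
  assumes inv: "painter_invariant R B \<sigma>" and xy: "y \<in> component (R \<union> B) x"
    and "finite R'" "finite B'" "R \<subseteq> R'" "B \<subseteq> B'" and U': "R' \<union> B' = insert {x, y} (R \<union> B)"
    and "consistent_colouring R' B' \<sigma>"
  shows "painter_invariant R' B' \<sigma>"
  using assms balanced_mono[of R B \<sigma> _ R' B' \<sigma>] component_insert_edge_inside[OF xy]
  unfolding painter_invariant_def U' by simp

lemma painter_invariant_insert_between:
  assumes inv: "painter_invariant R B \<sigma>" and xy: "y \<notin> component (R \<union> B) x"
    and "finite R'" "finite B'" "R \<subseteq> R'" "B \<subseteq> B'" and U': "R' \<union> B' = insert {x, y} (R \<union> B)"
    and cons: "consistent_colouring R' B' (recolour (component (R \<union> B) y) c \<sigma>)"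
    and merged: "balanced R' B' (recolour (component (R \<union> B) y) c \<sigma>)
           (component (R \<union> B) x \<union> component (R \<union> B) y)"
  shows "painter_invariant R' B' (recolour (component (R \<union> B) y) c \<sigma>)"
  unfolding painter_invariant_def
proof (intro conjI allI impI)
  let ?C = "component (R \<union> B)" and ?\<sigma>' = "recolour (component (R \<union> B) y) c \<sigma>"
  fix z assume nontrivial: "component (R' \<union> B') z \<noteq> {z}"
  show "balanced R' B' ?\<sigma>' (component (R' \<union> B') z)"
  proof (cases "x \<in> ?C z \<or> y \<in> ?C z")
    case True
    then show ?thesis using merged unfolding U' component_insert_edge by simp
  next
    case False
    then have "?C z \<inter> ?C y = {}" by (intro component_disjoint) simp
    then have "\<forall>v\<in>?C z. ?\<sigma>' v = \<sigma> v" unfolding recolour_def by auto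
    moreover have "balanced R B \<sigma> (?C z)"
      using inv nontrivial False unfolding painter_invariant_def U' component_insert_edge by auto
    ultimately show ?thesis
      using False balanced_mono assms(3-6) unfolding U' component_insert_edge by simp
  qed
qed (rule cons)

lemma surplus_merge_components:
  assumes "finite R" "finite B" "\<forall>e\<in>R \<union> B. is_edge e" "y \<notin> component (R \<union> B) x"
  shows "surplus R B (recolour (component (R \<union> B) y) c \<sigma>)
             (component (R \<union> B) x \<union> component (R \<union> B) y) t =
           surplus R B \<sigma> (component (R \<union> B) x) t +
           surplus R B \<sigma> (component (R \<union> B) y) (t \<noteq> c) + 1 - 2 * \<phi>"
proof (rule surplus_recolour_union)
  let ?C = "component (R \<union> B)"
  show "{} \<notin> R \<union> B" using assms(3) not_is_edge_empty by blast
  show "finite (?C x)" "finite (?C y)"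
    using assms(1-3) is_edge_finite by (simp_all add: finite_component)
  show "?C x \<inter> ?C y = {}" using assms(4) by (rule component_disjoint)
  show "\<forall>e\<in>R \<union> B. e \<subseteq> ?C x \<union> ?C y \<longrightarrow> e \<subseteq> ?C x \<or> e \<subseteq> ?C y"
  proof (intro ballI impI)
    fix e assume "e \<in> R \<union> B" "e \<subseteq> ?C x \<union> ?C y"
    moreover obtain a b where "e = {a, b}"
      using \<open>e \<in> R \<union> B\<close> assms(3) unfolding is_edge_def by blast
    ultimately show "e \<subseteq> ?C x \<or> e \<subseteq> ?C y" using edge_subset_component[of a b "R \<union> B"] by blast
  qed
qed (use assms in auto)

lemma safe_position_insert_red_between:
  assumes safe: "safe_position R B" and inv: "painter_invariant R B \<sigma>" and "x \<noteq> y" "{x, y} \<notin> R"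
    and xy: "y \<notin> component (R \<union> B) x"
    and region: "in_region
      (surplus R B \<sigma> (component (R \<union> B) x) (\<sigma> x) +
       surplus R B \<sigma> (component (R \<union> B) y) (\<not> \<sigma> y) - (2 * \<phi> - 2))
      (surplus R B \<sigma> (component (R \<union> B) x) (\<not> \<sigma> x) +
       surplus R B \<sigma> (component (R \<union> B) y) (\<sigma> y) - (2 * \<phi> - 2))"
  shows "safe_position (insert {x, y} R) B"
proof -
  let ?C = "component (R \<union> B)" and ?R' = "insert {x, y} R"
  define c where "c = (\<sigma> y = \<sigma> x)"
  let ?\<sigma>' = "recolour (?C y) c \<sigma>"
  have fin: "finite R" "finite B" and edges: "\<forall>e\<in>R \<union> B. is_edge e"
    using safe unfolding safe_position_def by auto
  have "?\<sigma>' x = \<sigma> x" using xy by (rule recolour_component_outside)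
  moreover have "?\<sigma>' y = (\<sigma> y \<noteq> c)" unfolding recolour_def by simp
  ultimately have "consistent_colouring ?R' B ?\<sigma>'"
    using inv consistent_colouring_recolour_component consistent_colouring_insert_red
    unfolding painter_invariant_def c_def by (metis (full_types))
  moreover have "balanced ?R' B ?\<sigma>' (?C x \<union> ?C y)"
  proof -
    have "surplus ?R' B ?\<sigma>' (?C x \<union> ?C y) t =
            surplus R B \<sigma> (?C x) t + surplus R B \<sigma> (?C y) (t \<noteq> c) - (2 * \<phi> - 2)" for t
      using surplus_insert_red[OF fin(1) assms(4)] surplus_merge_components[OF fin edges xy]
      by simp
    note merged = this
    have "(\<sigma> x \<noteq> c) = (\<not> \<sigma> y)" "((\<not> \<sigma> x) \<noteq> c) = \<sigma> y" unfolding c_def by auto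
    then show ?thesis using region merged[of "\<sigma> x"] merged[of "\<not> \<sigma> x"]
      unfolding balanced_iff_colour[where b = "\<sigma> x"] by simp
  qed
  ultimately have "painter_invariant ?R' B ?\<sigma>'"
    using fin by (intro painter_invariant_insert_between[OF inv xy]) auto
  then show ?thesis
    using fin edges is_edge_doubleton[OF \<open>x \<noteq> y\<close>] unfolding safe_position_def by blast
qed

lemma safe_position_insert_blue_between:
  assumes safe: "safe_position R B" and inv: "painter_invariant R B \<sigma>" and "x \<noteq> y" "{x, y} \<notin> B"
    and xy: "y \<notin> component (R \<union> B) x"
    and region: "in_region
      (surplus R B \<sigma> (component (R \<union> B) x) (\<sigma> x) +
       surplus R B \<sigma> (component (R \<union> B) y) (\<sigma> y) - (2 * \<phi> - 1))
      (surplus R B \<sigma> (component (R \<union> B) x) (\<not> \<sigma> x) +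
       surplus R B \<sigma> (component (R \<union> B) y) (\<not> \<sigma> y) - (2 * \<phi> - 2))"
  shows "safe_position R (insert {x, y} B)"
proof -
  let ?C = "component (R \<union> B)" and ?B' = "insert {x, y} B"
  define c where "c = (\<sigma> y \<noteq> \<sigma> x)"
  let ?\<sigma>' = "recolour (?C y) c \<sigma>"
  have fin: "finite R" "finite B" and edges: "\<forall>e\<in>R \<union> B. is_edge e"
    using safe unfolding safe_position_def by auto
  have \<sigma>': "?\<sigma>' x = \<sigma> x" "?\<sigma>' y = \<sigma> x"
    using recolour_component_outside[OF xy] unfolding c_def recolour_def by auto
  then have "consistent_colouring R ?B' ?\<sigma>'"
    using inv consistent_colouring_recolour_component consistent_colouring_insert_blue
    unfolding painter_invariant_def by metis
  moreover have "balanced R ?B' ?\<sigma>' (?C x \<union> ?C y)"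
  proof -
    have "{x, y} \<subseteq> ?C x \<union> ?C y" by simp
    then have "surplus R ?B' ?\<sigma>' (?C x \<union> ?C y) t =
            surplus R B \<sigma> (?C x) t + surplus R B \<sigma> (?C y) (t \<noteq> c) + 1 - 2 * \<phi> +
            (if \<sigma> x \<noteq> t then 1 else 0)" for t
      using surplus_insert_blue[OF fin(2) assms(4)] surplus_merge_components[OF fin edges xy] \<sigma>'
      by simp
    note merged = this
    have "(\<sigma> x \<noteq> c) = \<sigma> y" "((\<not> \<sigma> x) \<noteq> c) = (\<not> \<sigma> y)" unfolding c_def by auto
    then have "surplus R ?B' ?\<sigma>' (?C x \<union> ?C y) (\<sigma> x) =
                 surplus R B \<sigma> (?C x) (\<sigma> x) + surplus R B \<sigma> (?C y) (\<sigma> y) - (2 * \<phi> - 1)"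
      "surplus R ?B' ?\<sigma>' (?C x \<union> ?C y) (\<not> \<sigma> x) =
                 surplus R B \<sigma> (?C x) (\<not> \<sigma> x) + surplus R B \<sigma> (?C y) (\<not> \<sigma> y) - (2 * \<phi> - 2)"
      using merged[of "\<sigma> x"] merged[of "\<not> \<sigma> x"] by simp_all
    then show ?thesis using region unfolding balanced_iff_colour[where b = "\<sigma> x"] by simp
  qed
  ultimately have "painter_invariant R ?B' ?\<sigma>'"
    using fin by (intro painter_invariant_insert_between[OF inv xy]) auto
  then show ?thesis
    using fin edges is_edge_doubleton[OF \<open>x \<noteq> y\<close>] unfolding safe_position_def by blast
qed

lemma safe_position_insert_inside:
  assumes safe: "safe_position R B" and inv: "painter_invariant R B \<sigma>" and "x \<noteq> y"
    and xy: "y \<in> component (R \<union> B) x"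
  shows "safe_position (insert {x, y} R) B \<or> safe_position R (insert {x, y} B)"
proof -
  have fin: "finite R" "finite B" and edges: "\<forall>e\<in>R \<union> B. is_edge e"
    using safe unfolding safe_position_def by auto
  have cons: "consistent_colouring R B \<sigma>" using inv unfolding painter_invariant_def by blast
  show ?thesis
  proof (cases "\<sigma> x = \<sigma> y")
    case True
    then have "painter_invariant R (insert {x, y} B) \<sigma>"
      using fin consistent_colouring_insert_blue[OF cons]
      by (intro painter_invariant_insert_inside[OF inv xy]) auto
    then show ?thesis
      using fin edges is_edge_doubleton[OF \<open>x \<noteq> y\<close>] unfolding safe_position_def by blast
  next
    case False
    then have "painter_invariant (insert {x, y} R) B \<sigma>"
      using fin consistent_colouring_insert_red[OF cons]
      by (intro painter_invariant_insert_inside[OF inv xy]) auto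
    then show ?thesis
      using fin edges is_edge_doubleton[OF \<open>x \<noteq> y\<close>] unfolding safe_position_def by blast
  qed
qed

lemma safe_position_insert:
  assumes safe: "safe_position R B" and "is_edge e" "e \<notin> R" "e \<notin> B"
  shows "safe_position (insert e R) B \<or> safe_position R (insert e B)"
proof -
  obtain x y where e: "e = {x, y}" "x \<noteq> y" using \<open>is_edge e\<close> unfolding is_edge_def by blast
  obtain \<sigma> where inv: "painter_invariant R B \<sigma>" using safe unfolding safe_position_def by blast
  show ?thesis
  proof (cases "y \<in> component (R \<union> B) x")
    case True
    then show ?thesis using safe_position_insert_inside[OF safe inv e(2)] e(1) by simp
  next
    case False
    let ?C = "component (R \<union> B)"
    have "\<forall>e\<in>R \<union> B. is_edge e" using safe unfolding safe_position_def by blast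
    then have "near_region (surplus R B \<sigma> (?C x) (\<sigma> x)) (surplus R B \<sigma> (?C x) (\<not> \<sigma> x))"
      "near_region (surplus R B \<sigma> (?C y) (\<sigma> y)) (surplus R B \<sigma> (?C y) (\<not> \<sigma> y))"
      using near_region_component[OF inv] by blast+
    from near_region_merge[OF this] show ?thesis
      using safe_position_insert_red_between[OF safe inv e(2) _ False]
        safe_position_insert_blue_between[OF safe inv e(2) _ False] assms(3,4) e(1) by blast
  qed
qed

lemma bichromatic_no_odd_cycle:
  fixes \<sigma> :: "nat \<Rightarrow> bool"
  assumes bip: "\<forall>a b. {a, b} \<in> R \<longrightarrow> \<sigma> a \<noteq> \<sigma> b" and "odd k"
  shows "\<not> contains_copy R (cycle_graph k)"
proof
  assume "contains_copy R (cycle_graph k)"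
  then obtain f where f: "\<forall>e\<in>snd (cycle_graph k). f ` e \<in> R" unfolding contains_copy_def by blast
  have flip: "\<sigma> (f i) \<noteq> \<sigma> (f ((i + 1) mod k))" if "i < k" for i
  proof -
    have "{i, (i + 1) mod k} \<in> snd (cycle_graph k)" unfolding cycle_graph_def using that by auto
    then have "{f i, f ((i + 1) mod k)} \<in> R" using f by force
    then show ?thesis using bip by blast
  qed
  have alternate: "\<sigma> (f i) = (\<sigma> (f 0) = even i)" if "i < k" for i
    using that
  proof (induction i)
    case (Suc i)
    then show ?case using flip[of i] by auto
  qed simp
  have "k - 1 < k" "even (k - 1)" "(k - 1 + 1) mod k = 0" using \<open>odd k\<close> by (auto elim: oddE)
  then show False using alternate[of "k - 1"] flip[of "k - 1"] by simp
qed

lemma safe_position_no_red_odd_cycle: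
  "safe_position R B \<Longrightarrow> \<not> (\<exists>H\<in>C_odd. contains_copy R H)"
  using bichromatic_no_odd_cycle
  unfolding safe_position_def painter_invariant_def consistent_colouring_def C_odd_def by blast

lemma connected_copy_monochromatic:
  assumes mono: "\<forall>a b. {a, b} \<in> B \<longrightarrow> \<sigma> a = \<sigma> b" and conn: "connected_graph H"
    and f: "\<forall>e\<in>snd H. f ` e \<in> B" and "u \<in> fst H" "v \<in> fst H"
  shows "f v \<in> component (R \<union> B) (f u) \<and> \<sigma> (f v) = \<sigma> (f u)"
proof -
  have "(u, v) \<in> {(x, y). {x, y} \<in> snd H}\<^sup>*"
    using conn assms(4,5) unfolding connected_graph_def by blast
  then show ?thesis
  proof (induction rule: rtrancl_induct)
    case (step a b)
    then have "{a, b} \<in> snd H" by simp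
    then have "{f a, f b} \<in> B" using f by fastforce
    then have "f b \<in> component (R \<union> B) (f u)" "\<sigma> (f a) = \<sigma> (f b)"
      using component_edge_iff[of "f a" "f b" "R \<union> B" "f u"] step.IH mono by auto
    then show ?case using step.IH by simp
  qed simp
qed

lemma charged_edges_add_le:
  assumes "finite R" "finite B" "{} \<notin> B" "F \<subseteq> {e \<in> B. e \<subseteq> W \<and> (\<forall>v\<in>e. \<sigma> v = t)}"
  shows "charged_edges R B \<sigma> W t + card F \<le> card R + card B"
proof -
  let ?N = "{e \<in> B. e \<subseteq> W \<and> (\<forall>v\<in>e. \<sigma> v \<noteq> t)}"
  have "?N \<inter> F = {}" using assms(3,4) by fastforce
  moreover have "finite ?N" "finite F" using assms(2) finite_subset[OF assms(4)] by auto
  ultimately have "card ?N + card F = card (?N \<union> F)" by (simp add: card_Un_disjoint)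
  also have "\<dots> \<le> card B" using assms(2,4) by (intro card_mono) auto
  finally show ?thesis using card_mono[OF assms(1), of "{e \<in> R. e \<subseteq> W}"]
    unfolding charged_edges_def by simp
qed

lemma surplus_nonneg:
  "painter_invariant R B \<sigma> \<Longrightarrow> component (R \<union> B) z \<noteq> {z} \<Longrightarrow>
     0 \<le> surplus R B \<sigma> (component (R \<union> B) z) t"
  unfolding painter_invariant_def balanced_def in_region_def by (cases t) auto

lemma charged_edges_add_copy_le:
  assumes "finite R" "finite B" "{} \<notin> B" "inj_on f V" "E \<subseteq> Pow V"
    and "\<forall>e\<in>E. f ` e \<in> B" "\<forall>v\<in>V. f v \<in> W \<and> \<sigma> (f v) = t"
  shows "charged_edges R B \<sigma> W t + card E \<le> card R + card B"
proof -
  have "inj_on (image f) E"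
    using assms(5) by (rule inj_on_subset[OF inj_on_image_Pow[OF assms(4)]])
  then have "card (image f ` E) = card E" by (rule card_image)
  moreover have "image f ` E \<subseteq> {e \<in> B. e \<subseteq> W \<and> (\<forall>v\<in>e. \<sigma> v = t)}"
  proof
    fix e' assume "e' \<in> image f ` E"
    then obtain e where "e \<in> E" "e' = f ` e" by blast
    moreover have "e \<subseteq> V" using \<open>e \<in> E\<close> assms(5) by blast
    ultimately show "e' \<in> {e \<in> B. e \<subseteq> W \<and> (\<forall>v\<in>e. \<sigma> v = t)}" using assms(6,7) by auto
  qed
  then have "charged_edges R B \<sigma> W t + card (image f ` E) \<le> card R + card B"
    by (rule charged_edges_add_le[OF assms(1-3)])
  ultimately show ?thesis by simp
qed

lemma class_size_copy_ge:
  assumes "finite W" "inj_on f V" "\<forall>v\<in>V. f v \<in> W \<and> \<sigma> (f v) = t"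
  shows "card V \<le> class_size \<sigma> W t"
proof -
  have "card (f ` V) \<le> class_size \<sigma> W t"
    unfolding class_size_def using assms(1,3) by (intro card_mono) auto
  then show ?thesis using card_image[OF assms(2)] by simp
qed

lemma blue_copy_lower_bound:
  assumes safe: "safe_position R B" and H: "H \<in> Con n m" and copy: "contains_copy B H" and "1 \<le> m"
  shows "\<phi> * n + m - 2 * \<phi> + 1 \<le> card R + card B"
proof -
  obtain \<sigma> where inv: "painter_invariant R B \<sigma>" using safe unfolding safe_position_def by blast
  have fin: "finite R" "finite B" and edges: "\<forall>e\<in>R \<union> B. is_edge e"
    using safe unfolding safe_position_def by auto
  obtain V E where VE: "H = (V, E)" by fastforce
  have E: "E \<subseteq> {{u, v} | u v. u \<in> V \<and> v \<in> V \<and> u \<noteq> v}" and "card V = n" "m \<le> card E"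
    and conn: "connected_graph H" using H unfolding VE Con_def finite_graph_def by auto
  obtain f where "inj_on f V" and f: "\<forall>e\<in>E. f ` e \<in> B"
    using copy unfolding contains_copy_def VE by auto
  have "E \<noteq> {}" using \<open>1 \<le> m\<close> \<open>m \<le> card E\<close> by auto
  then obtain a b where "a \<in> V" "b \<in> V" "a \<noteq> b" using E by blast
  define W where "W = component (R \<union> B) (f a)"
  define t where "t = \<sigma> (f a)"
  have mono: "\<forall>a b. {a, b} \<in> B \<longrightarrow> \<sigma> a = \<sigma> b"
    using inv unfolding painter_invariant_def consistent_colouring_def by blast
  have in_class: "\<forall>v\<in>V. f v \<in> W \<and> \<sigma> (f v) = t"
  proof
    fix v assume "v \<in> V"
    then show "f v \<in> W \<and> \<sigma> (f v) = t"
      using connected_copy_monochromatic[OF mono conn, of f a v R] f \<open>a \<in> V\<close>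
      unfolding W_def t_def VE by simp
  qed
  have "f b \<noteq> f a" using inj_on_eq_iff[OF \<open>inj_on f V\<close> \<open>b \<in> V\<close> \<open>a \<in> V\<close>] \<open>a \<noteq> b\<close> by simp
  moreover have "f b \<in> W" using in_class \<open>b \<in> V\<close> by simp
  ultimately have "W \<noteq> {f a}" by blast
  then have "0 \<le> surplus R B \<sigma> W t" unfolding W_def by (rule surplus_nonneg[OF inv])
  have "finite W" unfolding W_def using fin edges is_edge_finite by (simp add: finite_component)
  then have "n \<le> class_size \<sigma> W t"
    using class_size_copy_ge[OF _ \<open>inj_on f V\<close> in_class] \<open>card V = n\<close> by simp
  moreover have "real (charged_edges R B \<sigma> W t) + m \<le> card R + card B"
  proof -
    have "E \<subseteq> Pow V" using E by blast
    moreover have "{} \<notin> B" using edges not_is_edge_empty by blast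
    ultimately have "charged_edges R B \<sigma> W t + card E \<le> card R + card B"
      using charged_edges_add_copy_le[OF fin _ \<open>inj_on f V\<close> _ f in_class] by simp
    then have "charged_edges R B \<sigma> W t + m \<le> card R + card B" using \<open>m \<le> card E\<close> by simp
    then show ?thesis by (metis of_nat_add of_nat_le_iff)
  qed
  moreover have "\<phi> * real n \<le> \<phi> * real (class_size \<sigma> W t)"
    using \<open>n \<le> class_size \<sigma> W t\<close> one_less_golden_ratio by simp
  moreover note \<open>0 \<le> surplus R B \<sigma> W t\<close>
  moreover have "\<phi> * (real (class_size \<sigma> W t) - 2) = \<phi> * real (class_size \<sigma> W t) - 2 * \<phi>"
    by (simp add: algebra_simps)
  ultimately show ?thesis unfolding surplus_def by linarith
qed

lemma game_over_lower_bound: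
  assumes "game_over C_odd (Con n m) (R, B)" "safe_position R B" "1 \<le> m"
  shows "\<phi> * n + m - 2 * \<phi> + 1 \<le> card R + card B"
proof -
  obtain H where "H \<in> Con n m" "contains_copy B H"
    using assms(1,2) safe_position_no_red_odd_cycle unfolding game_over_def by auto
  then show ?thesis using blue_copy_lower_bound assms(2,3) by blast
qed

lemma builder_wins_lower_bound:
  assumes "builder_wins C_odd (Con n m) k (R, B)" "safe_position R B" "1 \<le> m"
  shows "\<phi> * n + m - 2 * \<phi> + 1 \<le> card R + card B + k"
  using assms(1,2)
proof (induction k arbitrary: R B)
  case 0
  then show ?case using game_over_lower_bound assms(3) by simp
next
  case (Suc k)
  show ?case
  proof (cases "game_over C_odd (Con n m) (R, B)")
    case True
    then show ?thesis using game_over_lower_bound Suc.prems(2) assms(3) by fastforce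
  next
    case False
    then obtain e where e: "is_edge e" "e \<notin> R" "e \<notin> B"
      "builder_wins C_odd (Con n m) k (insert e R, B)"
      "builder_wins C_odd (Con n m) k (R, insert e B)"
      using Suc.prems(1) by auto
    have "finite R" "finite B" using Suc.prems(2) unfolding safe_position_def by auto
    then show ?thesis
      using safe_position_insert[OF Suc.prems(2) e(1-3)] Suc.IH[OF e(4)] Suc.IH[OF e(5)] e(2,3)
      by auto
  qed
qed

lemma safe_position_empty: "safe_position {} {}"
proof -
  have "component {} z = {z}" for z unfolding component_def edge_rel_def by simp
  then have "painter_invariant {} {} (\<lambda>_. True)"
    unfolding painter_invariant_def consistent_colouring_def by simp
  then show ?thesis unfolding safe_position_def by blast
qed

theorem theorem1:
  fixes n m :: nat
  assumes "n \<ge> 1" and "m \<ge> 1" and "n - 1 \<le> m" and "m \<le> n choose 2"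
  shows "ereal (golden_ratio * real n + real m - 2 * golden_ratio + 1)
           \<le> online_ramsey C_odd (Con n m)"
  unfolding online_ramsey_def
proof (rule Inf_greatest)
  fix x assume "x \<in> {ereal (real k) | k. builder_wins C_odd (Con n m) k ({}, {})}"
  then obtain k where "x = ereal (real k)" "builder_wins C_odd (Con n m) k ({}, {})" by blast
  then show "ereal (golden_ratio * real n + real m - 2 * golden_ratio + 1) \<le> x"
    using builder_wins_lower_bound[OF _ safe_position_empty \<open>m \<ge> 1\<close>] by simp
qed

end
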